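(* For complex parameters $a,b,c,d$ such that the series on the left converges and all terms are defined, $${}_3F_2\!\left[\begin{matrix}a,\ b,\ d+2\\ c+1,\ d\end{matrix};1\right]=\frac{\Gamma(c+1)\Gamma(c-a-b)}{\Gamma(c-a+1)\Gamma(c-b+1)}\left\{(c-a-b)+\frac{2ab}{d}+\frac{ab(a+1)(b+1)}{d(d+1)(c-a-b-1)}\right\}.$$
   Context: $(a)_k=a(a+1)\cdots(a+k-1)$ is the Pochhammer symbol and ${}_3F_2\!\left[\begin{matrix}a_1,a_2,a_3\\ b_1,b_2\end{matrix};z\right]=\sum_{k\ge0}\frac{(a_1)_k(a_2)_k(a_3)_k}{(b_1)_k(b_2)_k}\frac{z^k}{k!}$. *)

theory Defs
  imports "HOL-Analysis.Analysis"
begin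

definition hyp3F2_term :: "complex \<Rightarrow> complex \<Rightarrow> complex \<Rightarrow> complex \<Rightarrow> complex \<Rightarrow> complex \<Rightarrow> nat \<Rightarrow> complex" where
  "hyp3F2_term a1 a2 a3 b1 b2 z k =
     pochhammer a1 k * pochhammer a2 k * pochhammer a3 k
       / (pochhammer b1 k * pochhammer b2 k) * z ^ k / of_nat (fact k)"

definition hyp3F2 :: "complex \<Rightarrow> complex \<Rightarrow> complex \<Rightarrow> complex \<Rightarrow> complex \<Rightarrow> complex \<Rightarrow> complex" where
  "hyp3F2 a1 a2 a3 b1 b2 z = (\<Sum>k. hyp3F2_term a1 a2 a3 b1 b2 z k)"

end

theory Submission
  imports Defs
begin

text \<open>
  Writing the terms of the ${}_3F_2$ series as $A_k\,(d+k)(d+k+1)/(d(d+1))$, where $A_k$ are the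
  terms of Gauss's series ${}_2F_1(a,b;c+1;1)$, and expanding $(d+k)(d+k+1)$ in the falling
  factorials $1$, $k$, $k(k-1)$ splits the series into $\sum A_k$, $\sum k A_k$ and
  $\sum k(k-1) A_k$. Since $k A_k$ and $k(k-1) A_k$ are multiples of shifted Gauss terms with
  parameters raised by one and by two, all three sums are given by Gauss's summation theorem.
  Convergence of the pieces follows from convergence of the ${}_3F_2$ series by Abel's test.
  Gauss's theorem itself is proved from the contiguous relation
  $c(c-a-b)\,F(c) = (c-a)(c-b)\,F(c+1)$, iterated $n$ times, together with
  $F(c+n) \to 1$ and the Euler product for $1/\Gamma$.
\<close>

section \<open>Abel's test\<close>

definition bounded_variation_seq :: "(nat \<Rightarrow> 'a :: real_normed_vector) \<Rightarrow> bool" where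
  "bounded_variation_seq \<beta> \<longleftrightarrow> summable (\<lambda>k. norm (\<beta> (Suc k) - \<beta> k))"

lemma summable_mult_bounded_variation:
  fixes f \<beta> :: "nat \<Rightarrow> 'a :: {real_normed_algebra, banach}"
  assumes f: "summable f" and "bounded_variation_seq \<beta>"
  shows "summable (\<lambda>k. f k * \<beta> k)"
proof -
  have bv: "summable (\<lambda>k. norm (\<beta> (Suc k) - \<beta> k))"
    using \<open>bounded_variation_seq \<beta>\<close> by (simp add: bounded_variation_seq_def)
  define S where "S n = (\<Sum>k<n. f k)" for n
  have by_parts: "(\<Sum>k<n. f k * \<beta> k) = S n * \<beta> n - (\<Sum>k<n. S (Suc k) * (\<beta> (Suc k) - \<beta> k))" for n
    by (induction n) (simp_all add: S_def algebra_simps)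
  have S: "S \<longlonglongrightarrow> suminf f"
    unfolding S_def using summable_LIMSEQ[OF f] .
  then obtain M where M: "\<And>n. norm (S n) \<le> M"
    using convergent_imp_Bseq convergentI by (metis BseqE)
  have "summable (\<lambda>k. \<beta> (Suc k) - \<beta> k)"
    using summable_norm_cancel[OF bv] .
  then have "(\<lambda>n. \<beta> 0 + (\<Sum>k<n. \<beta> (Suc k) - \<beta> k)) \<longlonglongrightarrow> \<beta> 0 + (\<Sum>k. \<beta> (Suc k) - \<beta> k)"
    by (intro tendsto_intros summable_LIMSEQ)
  then obtain L where \<beta>: "\<beta> \<longlonglongrightarrow> L"
    by (auto simp: sum_lessThan_telescope)
  have "summable (\<lambda>k. S (Suc k) * (\<beta> (Suc k) - \<beta> k))"
  proof (rule summable_comparison_test[OF _ summable_mult[OF bv, of M]])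
    show "\<exists>N. \<forall>n\<ge>N. norm (S (Suc n) * (\<beta> (Suc n) - \<beta> n)) \<le> M * norm (\<beta> (Suc n) - \<beta> n)"
      using M by (auto intro!: order.trans[OF norm_mult_ineq] mult_right_mono)
  qed
  then obtain s where "(\<lambda>n. \<Sum>k<n. S (Suc k) * (\<beta> (Suc k) - \<beta> k)) \<longlonglongrightarrow> s"
    by (auto simp: summable_def sums_def)
  then have "(\<lambda>n. \<Sum>k<n. f k * \<beta> k) \<longlonglongrightarrow> suminf f * L - s"
    unfolding by_parts using S \<beta> by (intro tendsto_intros)
  then show ?thesis
    by (auto simp: summable_def sums_def)
qed

lemma bounded_variation_seq_add:
  assumes "bounded_variation_seq f" "bounded_variation_seq g"
  shows "bounded_variation_seq (\<lambda>k. f k + g k)"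
  unfolding bounded_variation_seq_def
proof (rule summable_comparison_test[OF _ summable_add[OF assms[unfolded bounded_variation_seq_def]]])
  show "\<exists>N. \<forall>n\<ge>N. norm (norm (f (Suc n) + g (Suc n) - (f n + g n)))
                   \<le> norm (f (Suc n) - f n) + norm (g (Suc n) - g n)"
    by (auto simp: add_diff_add intro: norm_triangle_ineq)
qed

lemma bounded_variation_seq_cmult:
  fixes f :: "nat \<Rightarrow> 'a :: real_normed_algebra"
  assumes "bounded_variation_seq f"
  shows "bounded_variation_seq (\<lambda>k. c * f k)"
  unfolding bounded_variation_seq_def
proof (rule summable_comparison_test[OF _ summable_mult[OF assms[unfolded bounded_variation_seq_def], of "norm c"]])
  show "\<exists>N. \<forall>n\<ge>N. norm (norm (c * f (Suc n) - c * f n)) \<le> norm c * norm (f (Suc n) - f n)"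
    by (auto simp: right_diff_distrib[symmetric] intro: norm_mult_ineq)
qed

lemma bounded_variation_seq_Suc:
  "bounded_variation_seq f \<Longrightarrow> bounded_variation_seq (\<lambda>k. f (Suc k))"
  unfolding bounded_variation_seq_def by (subst summable_Suc_iff)

lemma bounded_variation_seq_inverse_plus_of_nat:
  fixes z :: "'a :: real_normed_field"
  shows "bounded_variation_seq (\<lambda>k. 1 / (z + of_nat k))"
  unfolding bounded_variation_seq_def
proof (rule summable_comparison_test_ev[OF _ summable_mult[OF inverse_power_summable[of 2, where 'a=real], of 4]])
  obtain N :: nat where N: "real N > 2 * norm z"
    using reals_Archimedean2 by blast
  have large: "norm (z + of_nat k) \<ge> real m / 2" if "m \<le> k" "N + 1 \<le> m" for k m
    using norm_triangle_ineq4[of "z + of_nat k" z] N that by (simp add: norm_of_nat)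
  show "eventually (\<lambda>k. norm (norm (1 / (z + of_nat (Suc k)) - 1 / (z + of_nat k)))
                      \<le> 4 * inverse (real k ^ 2)) sequentially"
    using eventually_ge_at_top[of "N + 1"]
  proof eventually_elim
    case (elim k)
    have n1: "norm (z + of_nat k) \<ge> real k / 2" and n2: "norm (z + of_nat (Suc k)) \<ge> real k / 2"
      using large[of k k] large[of k "Suc k"] elim by auto
    have k: "real k / 2 > 0" using elim by simp
    then have "z + of_nat k \<noteq> 0" "z + of_nat (Suc k) \<noteq> 0"
      using n1 n2 by auto
    then have "1 / (z + of_nat (Suc k)) - 1 / (z + of_nat k)
             = - 1 / ((z + of_nat k) * (z + of_nat (Suc k)))"
      by (simp add: field_simps)
    then have "norm (1 / (z + of_nat (Suc k)) - 1 / (z + of_nat k))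
             = 1 / (norm (z + of_nat k) * norm (z + of_nat (Suc k)))"
      by (simp add: norm_mult norm_divide)
    also have "\<dots> \<le> 1 / ((real k / 2) * (real k / 2))"
      using n1 n2 k by (intro divide_left_mono mult_mono mult_pos_pos) auto
    also have "\<dots> = 4 * inverse (real k ^ 2)"
      by (simp add: field_simps power2_eq_square)
    finally show ?case by simp
  qed
qed simp

section \<open>Gauss's summation theorem\<close>

lemma plus_of_nat_not_in_nonpos_Ints:
  fixes z :: "'a :: ring_1"
  shows "z \<notin> \<int>\<^sub>\<le>\<^sub>0 \<Longrightarrow> z + of_nat n \<notin> \<int>\<^sub>\<le>\<^sub>0"
  using nonpos_Ints_diff_Nats[of "z + of_nat n" "of_nat n"] by auto

lemma plus_of_nat_neq_0_if_not_in_nonpos_Ints: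
  fixes z :: "'a :: ring_1"
  shows "z \<notin> \<int>\<^sub>\<le>\<^sub>0 \<Longrightarrow> z + of_nat n \<noteq> 0"
  using plus_of_nat_eq_0_imp by blast

lemma pochhammer_neq_0_if_not_in_nonpos_Ints:
  fixes z :: "'a :: field_char_0"
  shows "z \<notin> \<int>\<^sub>\<le>\<^sub>0 \<Longrightarrow> pochhammer z n \<noteq> 0"
  using pochhammer_eq_0_imp_nonpos_Int by blast

lemma minus_one_not_in_nonpos_Ints:
  fixes z :: "'a :: ring_1"
  assumes "z \<notin> \<int>\<^sub>\<le>\<^sub>0" "z \<noteq> 1"
  shows "z - 1 \<notin> \<int>\<^sub>\<le>\<^sub>0"
proof
  assume "z - 1 \<in> \<int>\<^sub>\<le>\<^sub>0"
  then obtain n where n: "z - 1 = - of_nat n"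
    by (elim nonpos_Ints_cases')
  show False
  proof (cases n)
    case 0
    then show False using n assms(2) by simp
  next
    case (Suc m)
    then have "z + of_nat m = 0" using n by (simp add: algebra_simps)
    then show False using plus_of_nat_eq_0_imp assms(1) by blast
  qed
qed

definition gauss_term :: "complex \<Rightarrow> complex \<Rightarrow> complex \<Rightarrow> nat \<Rightarrow> complex" where
  "gauss_term a b c k = pochhammer a k * pochhammer b k / (pochhammer c k * of_nat (fact k))"

definition gauss_sum :: "complex \<Rightarrow> complex \<Rightarrow> complex \<Rightarrow> complex" where
  "gauss_sum a b c = (\<Sum>k. gauss_term a b c k)"

lemma gauss_term_0 [simp]: "gauss_term a b c 0 = 1"
  by (simp add: gauss_term_def)

lemma gauss_term_Suc:
  "gauss_term a b c (Suc k) = gauss_term a b c k * ((a + of_nat k) * (b + of_nat k) / ((c + of_nat k) * (of_nat k + 1)))"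
  by (cases "pochhammer c k = 0")
     (auto simp: gauss_term_def pochhammer_rec' field_simps)

lemma gauss_term_plus1_right:
  assumes "c \<notin> \<int>\<^sub>\<le>\<^sub>0"
  shows "gauss_term a b (c + 1) k = gauss_term a b c k * (c / (c + of_nat k))"
proof -
  have "c \<noteq> 0" "c + of_nat k \<noteq> 0" "pochhammer c k \<noteq> 0"
    using assms plus_of_nat_neq_0_if_not_in_nonpos_Ints[of c 0]
    by (auto simp: plus_of_nat_neq_0_if_not_in_nonpos_Ints pochhammer_neq_0_if_not_in_nonpos_Ints)
  moreover have "pochhammer (c + 1) k = (c + of_nat k) * pochhammer c k / c"
    using pochhammer_rec[of c k] pochhammer_rec'[of c k] \<open>c \<noteq> 0\<close>
    by (simp add: field_simps)
  ultimately show ?thesis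
    by (simp add: gauss_term_def)
qed

lemma gauss_term_contiguous:
  assumes c: "c \<notin> \<int>\<^sub>\<le>\<^sub>0"
  shows "c * (c - a - b) * gauss_term a b c k - (c - a) * (c - b) * gauss_term a b (c + 1) k
       = c * (of_nat k * gauss_term a b c k - of_nat (Suc k) * gauss_term a b c (Suc k))"
proof -
  have ck: "c + of_nat k \<noteq> 0"
    using c by (rule plus_of_nat_neq_0_if_not_in_nonpos_Ints)
  have "(of_nat k + 1 :: complex) \<noteq> 0"
    by (metis of_nat_Suc of_nat_eq_0_iff Suc_neq_Zero add.commute)
  then have "of_nat (Suc k) * gauss_term a b c (Suc k)
      = gauss_term a b c k * ((a + of_nat k) * (b + of_nat k) / (c + of_nat k))"
    unfolding gauss_term_Suc of_nat_Suc by (simp add: ac_simps)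
  then show ?thesis
    unfolding gauss_term_plus1_right[OF c] using ck by (simp only:) (simp add: field_simps)
qed

lemma summable_of_nat_mult_tendsto_zero:
  fixes f :: "nat \<Rightarrow> complex"
  assumes f: "summable f" and l: "(\<lambda>n. of_nat n * f n) \<longlonglongrightarrow> l"
  shows "l = 0"
proof (rule ccontr)
  assume "l \<noteq> 0"
  then have l2: "(norm l)\<^sup>2 > 0" by simp
  define g where "g n = Re (cnj l * f n)" for n
  have "summable g"
    unfolding g_def by (intro summable_Re summable_mult f)
  have "(\<lambda>n. Re (cnj l * (of_nat n * f n))) \<longlonglongrightarrow> Re (cnj l * l)"
    by (intro tendsto_intros l)
  then have "(\<lambda>n. real n * g n) \<longlonglongrightarrow> (norm l)\<^sup>2"
    by (simp add: g_def complex_mult_cnj cmod_def power2_eq_square algebra_simps)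
  then have ev: "eventually (\<lambda>n. (norm l)\<^sup>2 / 2 < real n * g n) sequentially"
    using l2 by (intro order_tendstoD(1)) auto
  \<comment> \<open>Eventually $g_n \ge |l|^2/(2n)$, contradicting the divergence of the harmonic series.\<close>
  have "summable (\<lambda>n. (norm l)\<^sup>2 / 2 * inverse (real n))"
  proof (rule summable_comparison_test_ev[OF _ \<open>summable g\<close>])
    show "eventually (\<lambda>n. norm ((norm l)\<^sup>2 / 2 * inverse (real n)) \<le> g n) sequentially"
      using ev eventually_gt_at_top[of "0::nat"]
      by eventually_elim (auto simp: field_simps)
  qed
  then have "summable (\<lambda>n. inverse (real n))"
    using l2 by (simp add: summable_cmult_iff)
  then show False
    using not_summable_harmonic[where 'a=real] by (simp add: inverse_eq_divide)
qed

lemma gauss_sum_contiguous: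
  assumes s: "summable (gauss_term a b c)" and c: "c \<notin> \<int>\<^sub>\<le>\<^sub>0"
  shows "summable (gauss_term a b (c + 1))"
    and "c * (c - a - b) * gauss_sum a b c = (c - a) * (c - b) * gauss_sum a b (c + 1)"
proof -
  have c0: "c \<noteq> 0"
    using plus_of_nat_neq_0_if_not_in_nonpos_Ints[OF c, of 0] by simp
  have bv: "bounded_variation_seq (\<lambda>k. c * (1 / (c + of_nat k)))"
    by (intro bounded_variation_seq_cmult bounded_variation_seq_inverse_plus_of_nat)
  have "gauss_term a b (c + 1) = (\<lambda>k. gauss_term a b c k * (c * (1 / (c + of_nat k))))"
    by (simp add: fun_eq_iff gauss_term_plus1_right[OF c])
  then show s1: "summable (gauss_term a b (c + 1))"
    using summable_mult_bounded_variation[OF s bv] by simp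
  define D where "D k = of_nat k * gauss_term a b c k" for k
  define L where "L = c * (c - a - b) * gauss_sum a b c - (c - a) * (c - b) * gauss_sum a b (c + 1)"
  have "(\<lambda>k. c * (c - a - b) * gauss_term a b c k - (c - a) * (c - b) * gauss_term a b (c + 1) k) sums L"
    unfolding L_def gauss_sum_def by (intro sums_diff sums_mult summable_sums s s1)
  then have "(\<lambda>n. - c * D n) \<longlonglongrightarrow> L"
    unfolding sums_def gauss_term_contiguous[OF c] sum_distrib_left[symmetric]
      D_def[symmetric] sum_lessThan_telescope'
    by (simp add: D_def)
  then have "(\<lambda>n. - 1 / c * (- c * D n)) \<longlonglongrightarrow> - 1 / c * L"
    by (intro tendsto_intros)
  then have "(\<lambda>n. of_nat n * gauss_term a b c n) \<longlonglongrightarrow> - 1 / c * L"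
    using c0 by (simp add: D_def)
  \<comment> \<open>The telescoped remainder $n A_n$ tends to $0$ because the series converges.\<close>
  then have "- 1 / c * L = 0"
    by (rule summable_of_nat_mult_tendsto_zero[OF s])
  then show "c * (c - a - b) * gauss_sum a b c = (c - a) * (c - b) * gauss_sum a b (c + 1)"
    using c0 by (simp add: L_def)
qed

lemma gauss_sum_contiguous_iterate:
  assumes s: "summable (gauss_term a b c)" and c: "c \<notin> \<int>\<^sub>\<le>\<^sub>0"
  shows "summable (gauss_term a b (c + of_nat n)) \<and>
    gauss_sum a b c * pochhammer c n * pochhammer (c - a - b) n
      = pochhammer (c - a) n * pochhammer (c - b) n * gauss_sum a b (c + of_nat n)"
proof (induction n)
  case 0
  then show ?case using s by simp
next
  case (Suc n)
  define x where "x = c + of_nat n"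
  have x: "x \<notin> \<int>\<^sub>\<le>\<^sub>0"
    unfolding x_def using c by (rule plus_of_nat_not_in_nonpos_Ints)
  have sx: "summable (gauss_term a b x)" and IH: "gauss_sum a b c * pochhammer c n * pochhammer (c - a - b) n
      = pochhammer (c - a) n * pochhammer (c - b) n * gauss_sum a b x"
    using Suc by (simp_all add: x_def)
  have "gauss_sum a b c * pochhammer c (Suc n) * pochhammer (c - a - b) (Suc n)
      = pochhammer (c - a) n * pochhammer (c - b) n * (x * (x - a - b) * gauss_sum a b x)"
    using IH by (simp add: pochhammer_rec' x_def algebra_simps)
  also have "\<dots> = pochhammer (c - a) n * pochhammer (c - b) n * ((x - a) * (x - b) * gauss_sum a b (x + 1))"
    using gauss_sum_contiguous(2)[OF sx x] by simp
  also have "\<dots> = pochhammer (c - a) (Suc n) * pochhammer (c - b) (Suc n) * gauss_sum a b (x + 1)"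
    by (simp add: pochhammer_rec' x_def algebra_simps)
  finally show ?case
    using gauss_sum_contiguous(1)[OF sx x] by (simp add: x_def add_ac)
qed

lemma gauss_term_ratio_ineq:
  fixes p q k R :: real
  assumes "p \<ge> 0" "q \<ge> 0" "k \<ge> 0" "R \<ge> 4 * (p + 1) * (q + 1)"
  shows "(p + k) * (q + k) * (k + 2)\<^sup>2 \<le> (k + 1)\<^sup>2 * ((R + k) * (k + 1))"
proof -
  have pq: "p * q \<ge> 0" using assms by simp
  have R: "R \<ge> 4 * (p * q) + 4 * p + 4 * q + 4" using assms(4) by (simp add: algebra_simps)
  have "(k + 1)\<^sup>2 * ((R + k) * (k + 1)) - (p + k) * (q + k) * (k + 2)\<^sup>2 =
     (R - p - q - 1) * k ^ 3 + (3 * R - p * q - 4 * p - 4 * q - 1) * k\<^sup>2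
       + (3 * R + 1 - 4 * (p * q) - 4 * p - 4 * q) * k + (R - 4 * (p * q))"
    by (simp add: algebra_simps power2_eq_square power3_eq_cube)
  moreover have "R - p - q - 1 \<ge> 0" "3 * R - p * q - 4 * p - 4 * q - 1 \<ge> 0"
    "3 * R + 1 - 4 * (p * q) - 4 * p - 4 * q \<ge> 0"
    using R pq assms by linarith+
  then have "(R - p - q - 1) * k ^ 3 \<ge> 0" "(3 * R - p * q - 4 * p - 4 * q - 1) * k\<^sup>2 \<ge> 0"
    "(3 * R + 1 - 4 * (p * q) - 4 * p - 4 * q) * k \<ge> 0"
    using assms(3) by simp_all
  ultimately show ?thesis
    using R assms by linarith
qed

lemma gauss_term_ratio_norm_le:
  assumes R: "Re c \<ge> 4 * (norm a + 1) * (norm b + 1)"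
  shows "norm ((a + of_nat k) * (b + of_nat k) / ((c + of_nat k) * (of_nat k + 1)))
           \<le> (real k + 1)\<^sup>2 / (real k + 2)\<^sup>2"
proof -
  have "1 \<le> (norm a + 1) * (norm b + 1)"
    using mult_mono[of 1 "norm a + 1" 1 "norm b + 1"] by simp
  then have pos: "Re c + real k > 0"
    using R by linarith
  have "norm (of_nat k + 1 :: complex) = real k + 1"
    by (metis norm_of_nat of_nat_Suc of_nat_1 of_nat_add add.commute)
  then have "norm ((a + of_nat k) * (b + of_nat k) / ((c + of_nat k) * (of_nat k + 1)))
      = norm (a + of_nat k) * norm (b + of_nat k) / (norm (c + of_nat k) * (real k + 1))"
    by (simp add: norm_mult norm_divide)
  also have "\<dots> \<le> (norm a + real k) * (norm b + real k) / ((Re c + real k) * (real k + 1))"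
  proof (rule frac_le)
    show "norm (a + of_nat k) * norm (b + of_nat k) \<le> (norm a + real k) * (norm b + real k)"
      using norm_triangle_ineq[of a "of_nat k"] norm_triangle_ineq[of b "of_nat k"]
      by (intro mult_mono) auto
    show "(Re c + real k) * (real k + 1) \<le> norm (c + of_nat k) * (real k + 1)"
      using complex_Re_le_cmod[of "c + of_nat k"] by (intro mult_right_mono) auto
  qed (use pos in simp_all)
  also have "\<dots> \<le> (real k + 1)\<^sup>2 / (real k + 2)\<^sup>2"
  proof (rule mult_imp_div_pos_le)
    have "(norm a + real k) * (norm b + real k) * (real k + 2)\<^sup>2
          \<le> (real k + 1)\<^sup>2 * ((Re c + real k) * (real k + 1))"
      using R by (intro gauss_term_ratio_ineq) auto
    then show "(norm a + real k) * (norm b + real k)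
          \<le> (real k + 1)\<^sup>2 / (real k + 2)\<^sup>2 * ((Re c + real k) * (real k + 1))"
      by (simp add: le_divide_eq mult.assoc)
  qed (use pos in simp)
  finally show ?thesis .
qed

lemma gauss_term_norm_le:
  assumes "Re c \<ge> 4 * (norm a + 1) * (norm b + 1)"
  shows "norm (gauss_term a b c k) \<le> 1 / (real k + 1)\<^sup>2"
proof (induction k)
  case (Suc k)
  have "norm (gauss_term a b c (Suc k))
      = norm (gauss_term a b c k) * norm ((a + of_nat k) * (b + of_nat k) / ((c + of_nat k) * (of_nat k + 1)))"
    unfolding gauss_term_Suc by (rule norm_mult)
  also have "\<dots> \<le> 1 / (real k + 1)\<^sup>2 * ((real k + 1)\<^sup>2 / (real k + 2)\<^sup>2)"
    using Suc.IH gauss_term_ratio_norm_le[OF assms] by (intro mult_mono) auto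
  also have "\<dots> = 1 / (real (Suc k) + 1)\<^sup>2"
    by (simp add: field_simps)
  finally show ?case .
qed simp

lemma summable_norm_gauss_term:
  assumes "Re c \<ge> 4 * (norm a + 1) * (norm b + 1)"
  shows "summable (\<lambda>k. norm (gauss_term a b c k))"
proof (rule summable_comparison_test[OF _ summable_Suc_iff[THEN iffD2, OF inverse_power_summable[of 2, where 'a=real]]])
  show "\<exists>N. \<forall>n\<ge>N. norm (norm (gauss_term a b c n)) \<le> inverse (real (Suc n) ^ 2)"
    using gauss_term_norm_le[OF assms] by (auto simp: inverse_eq_divide add.commute)
qed simp

lemma norm_pochhammer_le_plus_of_nat:
  fixes z :: complex
  assumes "Re z \<ge> 0"
  shows "norm (pochhammer z k) \<le> norm (pochhammer (z + of_nat n) k)"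
proof -
  have "norm (z + of_nat i) \<le> norm (z + of_nat n + of_nat i)" for i
  proof -
    have "(Re z + real i)\<^sup>2 \<le> (Re z + real n + real i)\<^sup>2"
      using assms by (intro power_mono) auto
    then show ?thesis by (simp add: cmod_def)
  qed
  then show ?thesis
    unfolding pochhammer_prod prod_norm[symmetric] by (intro prod_mono) auto
qed

lemma Re_pos_not_in_nonpos_Ints: "Re z > 0 \<Longrightarrow> z \<notin> \<int>\<^sub>\<le>\<^sub>0"
  by (auto elim!: nonpos_Ints_cases')

lemma norm_gauss_term_Suc_plus_of_nat_le:
  assumes "Re c > 0"
  shows "norm (gauss_term a b (c + of_nat n) (Suc k))
           \<le> norm c / norm (c + of_nat n) * norm (gauss_term a b c (Suc k))"
proof -
  define Q where "Q = norm (pochhammer a (Suc k) * pochhammer b (Suc k)) / real (fact (Suc k))"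
  have norm_eq: "norm (gauss_term a b z (Suc k)) = Q / (norm z * norm (pochhammer (z + 1) k))" for z
    unfolding gauss_term_def pochhammer_rec[of z] Q_def
    by (simp only: norm_divide norm_mult norm_of_nat) (simp add: divide_divide_eq_left mult.commute)
  have c: "c \<notin> \<int>\<^sub>\<le>\<^sub>0"
    using assms by (rule Re_pos_not_in_nonpos_Ints)
  have "c \<noteq> 0" "c + of_nat n \<noteq> 0" "pochhammer (c + 1) k \<noteq> 0"
    using plus_of_nat_neq_0_if_not_in_nonpos_Ints[OF c, of 0]
      plus_of_nat_neq_0_if_not_in_nonpos_Ints[OF c, of n]
      pochhammer_neq_0_if_not_in_nonpos_Ints[OF plus_of_nat_not_in_nonpos_Ints[OF c, of 1]]
    by simp_all
  have "norm (gauss_term a b (c + of_nat n) (Suc k))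
      = Q / (norm (c + of_nat n) * norm (pochhammer (c + of_nat n + 1) k))"
    by (rule norm_eq)
  also have "\<dots> \<le> Q / (norm (c + of_nat n) * norm (pochhammer (c + 1) k))"
    using norm_pochhammer_le_plus_of_nat[of "c + 1" k n] assms \<open>c + of_nat n \<noteq> 0\<close>
      \<open>pochhammer (c + 1) k \<noteq> 0\<close>
    by (intro divide_left_mono mult_left_mono mult_pos_pos) (auto simp: Q_def add_ac)
  also have "\<dots> = norm c / norm (c + of_nat n) * norm (gauss_term a b c (Suc k))"
    unfolding norm_eq using \<open>c \<noteq> 0\<close> by (simp add: field_simps)
  finally show ?thesis .
qed

lemma gauss_sum_plus_of_nat_tendsto_1:
  assumes R: "Re c \<ge> 4 * (norm a + 1) * (norm b + 1)"
  shows "(\<lambda>n. gauss_sum a b (c + of_nat n)) \<longlonglongrightarrow> 1"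
proof -
  have "1 \<le> (norm a + 1) * (norm b + 1)"
    using mult_mono[of 1 "norm a + 1" 1 "norm b + 1"] by simp
  then have c: "Re c > 0"
    using R by linarith
  define S where "S = (\<Sum>k. norm (gauss_term a b c (Suc k)))"
  have sS: "summable (\<lambda>k. norm (gauss_term a b c (Suc k)))"
    using summable_norm_gauss_term[OF R] by (subst summable_Suc_iff)
  have "S \<ge> 0"
    unfolding S_def by (intro suminf_nonneg sS) auto
  have bound: "norm (gauss_sum a b (c + of_nat n) - 1) \<le> norm c * S / real n" if "n \<ge> 1" for n
  proof -
    have sn: "summable (\<lambda>k. norm (gauss_term a b (c + of_nat n) k))"
      using R by (intro summable_norm_gauss_term) simp
    then have sn': "summable (\<lambda>k. norm (gauss_term a b (c + of_nat n) (Suc k)))"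
      by (subst summable_Suc_iff)
    have "gauss_sum a b (c + of_nat n) - 1 = (\<Sum>k. gauss_term a b (c + of_nat n) (Suc k))"
      unfolding gauss_sum_def using suminf_split_head[OF summable_norm_cancel[OF sn]] by simp
    then have "norm (gauss_sum a b (c + of_nat n) - 1) \<le> (\<Sum>k. norm (gauss_term a b (c + of_nat n) (Suc k)))"
      using summable_norm[OF sn'] by simp
    also have "\<dots> \<le> (\<Sum>k. norm c / norm (c + of_nat n) * norm (gauss_term a b c (Suc k)))"
      by (intro suminf_le norm_gauss_term_Suc_plus_of_nat_le c sn' summable_mult sS)
    also have "\<dots> = norm c / norm (c + of_nat n) * S"
      unfolding S_def by (rule suminf_mult[OF sS])
    also have "\<dots> \<le> norm c / real n * S"
      using complex_Re_le_cmod[of "c + of_nat n"] c that \<open>S \<ge> 0\<close>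
      by (intro mult_right_mono divide_left_mono mult_pos_pos) auto
    finally show ?thesis by simp
  qed
  have "(\<lambda>n. gauss_sum a b (c + of_nat n) - 1) \<longlonglongrightarrow> 0"
  proof (rule Lim_null_comparison)
    show "eventually (\<lambda>n. norm (gauss_sum a b (c + of_nat n) - 1) \<le> norm c * S / real n) sequentially"
      using eventually_ge_at_top[of "1::nat"] by eventually_elim (rule bound)
  qed (rule lim_const_over_n)
  then show ?thesis
    by (rule LIM_zero_cancel)
qed

lemma rGamma_series_ratio:
  fixes a b c :: complex
  shows "rGamma_series (c - a) n * rGamma_series (c - b) n / (rGamma_series c n * rGamma_series (c - a - b) n)
   = pochhammer (c - a) (Suc n) * pochhammer (c - b) (Suc n) / (pochhammer c (Suc n) * pochhammer (c - a - b) (Suc n))"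
proof -
  define L where "L = (of_real (ln (of_nat n)) :: complex)"
  define E where "E z = exp (z * L)" for z
  have "E (c - a) * E (c - b) = E c * E (c - a - b)"
    unfolding E_def by (simp add: algebra_simps flip: exp_add)
  moreover have "E z \<noteq> 0" for z
    by (simp add: E_def)
  ultimately show ?thesis
    unfolding rGamma_series_def L_def[symmetric] E_def[symmetric]
    by (simp add: divide_simps)
qed

theorem gauss_summation:
  assumes s: "summable (gauss_term a b c)" and c: "c \<notin> \<int>\<^sub>\<le>\<^sub>0" and cab: "c - a - b \<notin> \<int>\<^sub>\<le>\<^sub>0"
  shows "gauss_sum a b c = Gamma c * Gamma (c - a - b) / (Gamma (c - a) * Gamma (c - b))"
proof -
  obtain m :: nat where "real m \<ge> 4 * (norm a + 1) * (norm b + 1) - Re c"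
    using real_arch_simple by blast
  then have "(\<lambda>n. gauss_sum a b (c + of_nat m + of_nat n)) \<longlonglongrightarrow> 1"
    by (intro gauss_sum_plus_of_nat_tendsto_1) simp
  then have "(\<lambda>n. gauss_sum a b (c + of_nat (n + m))) \<longlonglongrightarrow> 1"
    by (simp add: add_ac)
  then have "(\<lambda>n. gauss_sum a b (c + of_nat n)) \<longlonglongrightarrow> 1"
    by (rule LIMSEQ_offset)
  then have lim_sum: "(\<lambda>n. gauss_sum a b (c + of_nat (Suc n))) \<longlonglongrightarrow> 1"
    by (rule LIMSEQ_Suc)
  define r where "r n = rGamma_series (c - a) n * rGamma_series (c - b) n
                        / (rGamma_series c n * rGamma_series (c - a - b) n)" for n
  define L where "L = rGamma (c - a) * rGamma (c - b) / (rGamma c * rGamma (c - a - b))"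
  have r: "r \<longlonglongrightarrow> L"
    unfolding r_def[abs_def] L_def
    by (intro tendsto_intros) (use c cab in \<open>simp add: rGamma_eq_zero_iff\<close>)
  have iterate: "gauss_sum a b c = r n * gauss_sum a b (c + of_nat (Suc n))" for n
    using gauss_sum_contiguous_iterate[OF s c, of "Suc n"]
      pochhammer_neq_0_if_not_in_nonpos_Ints[OF c, of "Suc n"]
      pochhammer_neq_0_if_not_in_nonpos_Ints[OF cab, of "Suc n"]
    unfolding r_def rGamma_series_ratio by (simp add: divide_simps mult.assoc)
  have "(\<lambda>n. r n * gauss_sum a b (c + of_nat (Suc n))) \<longlonglongrightarrow> L * 1"
    by (rule tendsto_mult[OF r lim_sum])
  then have "(\<lambda>n. gauss_sum a b c) \<longlonglongrightarrow> L"
    unfolding iterate[symmetric] by simp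
  then have "gauss_sum a b c = L"
    by (simp add: LIMSEQ_const_iff)
  then show ?thesis
    by (simp add: L_def Gamma_def divide_inverse mult_ac)
qed

section \<open>Moments of Gauss's series and the ${}_3F_2$ sum\<close>

lemma of_nat_Suc_mult_gauss_term_Suc:
  "of_nat (Suc j) * gauss_term a b c (Suc j) = a * b / c * gauss_term (a + 1) (b + 1) (c + 1) j"
proof -
  have "(of_nat (Suc j) :: complex) \<noteq> 0"
    by (simp only: of_nat_eq_0_iff)
  then show ?thesis
    unfolding gauss_term_def pochhammer_rec[of a] pochhammer_rec[of b] pochhammer_rec[of c]
      fact_Suc of_nat_mult
    by (simp add: ac_simps)
qed

lemma gauss_first_moment:
  assumes s: "summable (\<lambda>k. of_nat k * gauss_term a b c k)"
    and c: "c \<notin> \<int>\<^sub>\<le>\<^sub>0" and cab: "c - a - b - 1 \<notin> \<int>\<^sub>\<le>\<^sub>0"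
  shows "(\<lambda>k. of_nat k * gauss_term a b c k)
           sums (a * b * Gamma c * Gamma (c - a - b - 1) / (Gamma (c - a) * Gamma (c - b)))"
proof -
  define G where "G = Gamma (c + 1) * Gamma (c - a - b - 1) / (Gamma (c - a) * Gamma (c - b))"
  have c1: "c + 1 \<notin> \<int>\<^sub>\<le>\<^sub>0"
    using c plus_one_in_nonpos_Ints_imp by blast
  have "(\<lambda>j. of_nat (Suc j) * gauss_term a b c (Suc j)) sums (a * b / c * G)"
  proof (cases "a * b = 0")
    case True
    then show ?thesis
      unfolding of_nat_Suc_mult_gauss_term_Suc by auto
  next
    case False
    moreover have "c \<noteq> 0"
      using plus_of_nat_neq_0_if_not_in_nonpos_Ints[OF c, of 0] by simp
    moreover have "summable (\<lambda>j. of_nat (Suc j) * gauss_term a b c (Suc j))"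
      using s by (subst summable_Suc_iff)
    ultimately have s': "summable (gauss_term (a + 1) (b + 1) (c + 1))"
      unfolding of_nat_Suc_mult_gauss_term_Suc by (simp add: summable_cmult_iff)
    have "gauss_sum (a + 1) (b + 1) (c + 1) = G"
      unfolding G_def
      using gauss_summation[OF s' c1] cab by (simp add: algebra_simps)
    then show ?thesis
      unfolding of_nat_Suc_mult_gauss_term_Suc gauss_sum_def
      using summable_sums[OF s'] by (intro sums_mult) simp
  qed
  moreover have "a * b / c * G = a * b * Gamma c * Gamma (c - a - b - 1) / (Gamma (c - a) * Gamma (c - b))"
    using plus_of_nat_neq_0_if_not_in_nonpos_Ints[OF c, of 0]
    by (simp add: G_def Gamma_plus1[OF c])
  ultimately show ?thesis
    using sums_Suc_iff[of "\<lambda>k. of_nat k * gauss_term a b c k"] by simp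
qed

lemma gauss_second_moment:
  assumes s: "summable (\<lambda>k. of_nat k * (of_nat k - 1) * gauss_term a b c k)"
    and c: "c \<notin> \<int>\<^sub>\<le>\<^sub>0" and cab: "c - a - b - 2 \<notin> \<int>\<^sub>\<le>\<^sub>0"
  shows "(\<lambda>k. of_nat k * (of_nat k - 1) * gauss_term a b c k)
           sums (a * (a + 1) * b * (b + 1) * Gamma c * Gamma (c - a - b - 2) / (Gamma (c - a) * Gamma (c - b)))"
proof -
  define M where "M = (a + 1) * (b + 1) * Gamma (c + 1) * Gamma (c - a - b - 2) / (Gamma (c - a) * Gamma (c - b))"
  have c1: "c + 1 \<notin> \<int>\<^sub>\<le>\<^sub>0"
    using c plus_one_in_nonpos_Ints_imp by blast
  have shift: "of_nat (Suc j) * (of_nat (Suc j) - 1) * gauss_term a b c (Suc j)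
      = a * b / c * (of_nat j * gauss_term (a + 1) (b + 1) (c + 1) j)" for j
    unfolding mult.left_commute[of _ "of_nat j"] of_nat_Suc_mult_gauss_term_Suc[symmetric]
    by (simp add: algebra_simps)
  have "(\<lambda>j. of_nat (Suc j) * (of_nat (Suc j) - 1) * gauss_term a b c (Suc j)) sums (a * b / c * M)"
  proof (cases "a * b = 0")
    case True
    then show ?thesis
      unfolding shift by auto
  next
    case False
    moreover have "c \<noteq> 0"
      using plus_of_nat_neq_0_if_not_in_nonpos_Ints[OF c, of 0] by simp
    moreover have "summable (\<lambda>j. of_nat (Suc j) * (of_nat (Suc j) - 1) * gauss_term a b c (Suc j))"
      using s by (subst summable_Suc_iff)
    ultimately have "summable (\<lambda>j. of_nat j * gauss_term (a + 1) (b + 1) (c + 1) j)"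
      unfolding shift by (simp add: summable_cmult_iff)
    moreover have args: "c + 1 - (a + 1) = c - a" "c + 1 - (b + 1) = c - b"
      "c - a - (b + 1) - 1 = c - a - b - 2"
      by simp_all
    ultimately have "(\<lambda>j. of_nat j * gauss_term (a + 1) (b + 1) (c + 1) j) sums M"
      using gauss_first_moment[of "a + 1" "b + 1" "c + 1", unfolded args, OF _ c1 cab]
      by (simp add: M_def mult_ac)
    then show ?thesis
      unfolding shift by (rule sums_mult)
  qed
  moreover have "a * b / c * M
      = a * (a + 1) * b * (b + 1) * Gamma c * Gamma (c - a - b - 2) / (Gamma (c - a) * Gamma (c - b))"
    using plus_of_nat_neq_0_if_not_in_nonpos_Ints[OF c, of 0]
    by (simp add: M_def Gamma_plus1[OF c])
  ultimately show ?thesis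
    using sums_Suc_iff[of "\<lambda>k. of_nat k * (of_nat k - 1) * gauss_term a b c k"] by simp
qed

lemma summable_of_quadratic_weight:
  fixes f :: "nat \<Rightarrow> complex"
  assumes s: "summable (\<lambda>k. (d + of_nat k) * (d + of_nat k + 1) * f k)" and d: "d \<notin> \<int>\<^sub>\<le>\<^sub>0"
  shows "summable f" and "summable (\<lambda>k. of_nat k * f k)"
proof -
  define g where "g k = (d + of_nat k) * (d + of_nat k + 1) * f k" for k
  define \<gamma> where "\<gamma> k = 1 / (d + of_nat k)" for k
  have dk: "d + of_nat k \<noteq> 0" "d + of_nat k + 1 \<noteq> 0" for k
    using plus_of_nat_neq_0_if_not_in_nonpos_Ints[OF d, of k]
      plus_of_nat_neq_0_if_not_in_nonpos_Ints[OF d, of "Suc k"] by (simp_all add: add_ac)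
  have \<gamma>_Suc: "\<gamma> (Suc k) = 1 / (d + of_nat k + 1)" for k
    by (simp add: \<gamma>_def add_ac)
  \<comment> \<open>Partial fractions express $f_k$ and $k f_k$ as $g_k$ times sequences of bounded variation.\<close>
  have partial_fractions: "x * y * (1 / x + (- 1) * (1 / y)) = y - x"
    "x * y * ((d + 1) * (1 / y) + (- d) * (1 / x)) = (d + 1) * x - d * y"
    if "x \<noteq> 0" "y \<noteq> 0" for x y :: complex
    using that by (simp_all add: field_simps)
  have "(d + of_nat k) * (d + of_nat k + 1) * (\<gamma> k + (- 1) * \<gamma> (Suc k)) = 1"
    and "(d + of_nat k) * (d + of_nat k + 1) * ((d + 1) * \<gamma> (Suc k) + (- d) * \<gamma> k) = of_nat k" for k
    using partial_fractions[OF dk(1)[of k] dk(2)[of k]]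
    unfolding \<gamma>_Suc \<gamma>_def by (simp_all add: algebra_simps)
  then have f_eq: "f = (\<lambda>k. g k * (\<gamma> k + (- 1) * \<gamma> (Suc k)))"
    and kf_eq: "(\<lambda>k. of_nat k * f k) = (\<lambda>k. g k * ((d + 1) * \<gamma> (Suc k) + (- d) * \<gamma> k))"
    by (simp_all add: fun_eq_iff g_def mult.commute mult.left_commute)
  have g: "summable g"
    using s by (simp add: g_def[abs_def])
  have "bounded_variation_seq \<gamma>"
    unfolding \<gamma>_def by (rule bounded_variation_seq_inverse_plus_of_nat)
  then have bv1: "bounded_variation_seq (\<lambda>k. \<gamma> k + (- 1) * \<gamma> (Suc k))"
    and bv2: "bounded_variation_seq (\<lambda>k. (d + 1) * \<gamma> (Suc k) + (- d) * \<gamma> k)"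
    by (intro bounded_variation_seq_add bounded_variation_seq_cmult bounded_variation_seq_Suc; assumption)+
  show "summable (\<lambda>k. of_nat k * f k)"
    unfolding kf_eq using g bv2 by (rule summable_mult_bounded_variation)
  show "summable f"
    unfolding f_eq using g bv1 by (rule summable_mult_bounded_variation)
qed

lemma hyp3F2_term_eq_gauss_term:
  assumes d: "d \<notin> \<int>\<^sub>\<le>\<^sub>0"
  shows "hyp3F2_term a b (d + 2) c d 1 k
           = (d + of_nat k) * (d + of_nat k + 1) / (d * (d + 1)) * gauss_term a b c k"
proof -
  have nz: "d \<noteq> 0" "d + 1 \<noteq> 0" "pochhammer d k \<noteq> 0"
    using plus_of_nat_neq_0_if_not_in_nonpos_Ints[OF d, of 0]
      plus_of_nat_neq_0_if_not_in_nonpos_Ints[OF d, of 1]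
      pochhammer_neq_0_if_not_in_nonpos_Ints[OF d] by simp_all
  have "d * ((d + 1) * pochhammer (d + 2) k) = pochhammer d (Suc (Suc k))"
    by (simp add: pochhammer_rec add.assoc one_add_one)
  also have "\<dots> = (d + of_nat k + 1) * ((d + of_nat k) * pochhammer d k)"
    by (simp add: pochhammer_rec' add_ac)
  finally have "d * (d + 1) * pochhammer (d + 2) k = (d + of_nat k) * (d + of_nat k + 1) * pochhammer d k"
    by (simp add: ac_simps)
  then have "pochhammer (d + 2) k = (d + of_nat k) * (d + of_nat k + 1) * pochhammer d k / (d * (d + 1))"
    using nz by (metis mult_eq_0_iff nonzero_mult_div_cancel_left)
  then show ?thesis
    using nz by (cases "pochhammer c k = 0") (simp_all add: hyp3F2_term_def gauss_term_def ac_simps)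
qed

lemma hyp3F2_term_expansion:
  assumes d: "d \<notin> \<int>\<^sub>\<le>\<^sub>0"
  shows "hyp3F2_term a b (d + 2) c d 1 k
           = gauss_term a b c k + 2 / d * (of_nat k * gauss_term a b c k)
               + 1 / (d * (d + 1)) * (of_nat k * (of_nat k - 1) * gauss_term a b c k)"
proof -
  define e where "e = d * (d + 1)"
  have "d \<noteq> 0" "d + 1 \<noteq> 0"
    using plus_of_nat_neq_0_if_not_in_nonpos_Ints[OF d, of 0]
      plus_of_nat_neq_0_if_not_in_nonpos_Ints[OF d, of 1] by simp_all
  then have e: "e \<noteq> 0" "2 / d = 2 * (d + 1) / e"
    using mult_divide_mult_cancel_right[of "d + 1" 2 d] by (simp_all add: e_def)
  have "(d + of_nat k) * (d + of_nat k + 1) = e + 2 * (d + 1) * of_nat k + of_nat k * (of_nat k - 1)"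
    by (simp add: e_def algebra_simps)
  then show ?thesis
    unfolding hyp3F2_term_eq_gauss_term[OF d] e_def[symmetric] e(2) using e(1)
    by (simp add: field_simps) (simp add: e_def algebra_simps)
qed

lemma hyp3F2_d_plus_2_eq_Gamma:
  assumes conv: "summable (hyp3F2_term a b (d + 2) c d 1)"
    and c: "c \<notin> \<int>\<^sub>\<le>\<^sub>0" and d: "d \<notin> \<int>\<^sub>\<le>\<^sub>0"
    and cab: "c - a - b \<notin> \<int>\<^sub>\<le>\<^sub>0" "c - a - b - 1 \<notin> \<int>\<^sub>\<le>\<^sub>0" "c - a - b - 2 \<notin> \<int>\<^sub>\<le>\<^sub>0"
  shows "hyp3F2 a b (d + 2) c d 1 = Gamma c / (Gamma (c - a) * Gamma (c - b)) *
           (Gamma (c - a - b) + 2 * a * b / d * Gamma (c - a - b - 1)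
              + a * (a + 1) * b * (b + 1) / (d * (d + 1)) * Gamma (c - a - b - 2))"
proof -
  define A where "A = gauss_term a b c"
  have nz: "d \<noteq> 0" "d + 1 \<noteq> 0"
    using plus_of_nat_neq_0_if_not_in_nonpos_Ints[OF d, of 0]
      plus_of_nat_neq_0_if_not_in_nonpos_Ints[OF d, of 1] by simp_all
  have "summable (\<lambda>k. d * (d + 1) * hyp3F2_term a b (d + 2) c d 1 k)"
    using conv by (rule summable_mult)
  then have "summable (\<lambda>k. (d + of_nat k) * (d + of_nat k + 1) * A k)"
    using nz by (simp add: hyp3F2_term_eq_gauss_term[OF d] A_def)
  then have s0: "summable A" and s1: "summable (\<lambda>k. of_nat k * A k)"
    using d by (rule summable_of_quadratic_weight)+
  have "summable (\<lambda>k. d * (d + 1) * (hyp3F2_term a b (d + 2) c d 1 k - A k - 2 / d * (of_nat k * A k)))"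
    by (intro summable_mult summable_diff conv s0 s1)
  then have s2: "summable (\<lambda>k. of_nat k * (of_nat k - 1) * A k)"
    using nz by (simp add: hyp3F2_term_expansion[OF d] A_def)
  have "(\<lambda>k. A k + 2 / d * (of_nat k * A k) + 1 / (d * (d + 1)) * (of_nat k * (of_nat k - 1) * A k))
    sums (Gamma c * Gamma (c - a - b) / (Gamma (c - a) * Gamma (c - b))
          + 2 / d * (a * b * Gamma c * Gamma (c - a - b - 1) / (Gamma (c - a) * Gamma (c - b)))
          + 1 / (d * (d + 1)) * (a * (a + 1) * b * (b + 1) * Gamma c * Gamma (c - a - b - 2)
                                  / (Gamma (c - a) * Gamma (c - b))))"
    using gauss_summation[OF s0[unfolded A_def] c cab(1)] summable_sums[OF s0]
      gauss_first_moment[OF s1[unfolded A_def] c cab(2)]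
      gauss_second_moment[OF s2[unfolded A_def] c cab(3)]
    unfolding A_def gauss_sum_def by (intro sums_add sums_mult) simp_all
  then show ?thesis
    unfolding hyp3F2_def hyp3F2_term_expansion[OF d, abs_def] A_def
    by (simp add: sums_iff divide_inverse algebra_simps)
qed

theorem mainTheorem6:
  fixes a b c d :: complex
  assumes conv: "summable (hyp3F2_term a b (d + 2) (c + 1) d 1)"
    and den_c: "c + 1 \<notin> \<int>\<^sub>\<le>\<^sub>0"
    and den_d: "d \<notin> \<int>\<^sub>\<le>\<^sub>0"
    and g1: "c - a - b \<notin> \<int>\<^sub>\<le>\<^sub>0"
    and g2: "c - a + 1 \<notin> \<int>\<^sub>\<le>\<^sub>0"
    and g3: "c - b + 1 \<notin> \<int>\<^sub>\<le>\<^sub>0"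
    and nz: "c - a - b - 1 \<noteq> 0"
  shows "hyp3F2 a b (d + 2) (c + 1) d 1 =
    Gamma (c + 1) * Gamma (c - a - b) / (Gamma (c - a + 1) * Gamma (c - b + 1)) *
    ((c - a - b) + 2 * a * b / d
       + a * b * (a + 1) * (b + 1) / (d * (d + 1) * (c - a - b - 1)))"
proof -
  have g0: "c - a - b + 1 \<notin> \<int>\<^sub>\<le>\<^sub>0"
    using plus_of_nat_not_in_nonpos_Ints[OF g1, of 1] by simp
  have gm1: "c - a - b - 1 \<notin> \<int>\<^sub>\<le>\<^sub>0"
    using minus_one_not_in_nonpos_Ints[OF g1] nz by simp
  have args: "c + 1 - a = c - a + 1" "c + 1 - b = c - b + 1" "c - a + 1 - b = c - a - b + 1"
    "c - a - b + 1 - 1 = c - a - b" "c - a - b + 1 - 2 = c - a - b - 1"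
    by simp_all
  have sum: "hyp3F2 a b (d + 2) (c + 1) d 1 = Gamma (c + 1) / (Gamma (c - a + 1) * Gamma (c - b + 1)) *
      (Gamma (c - a - b + 1) + 2 * a * b / d * Gamma (c - a - b)
         + a * (a + 1) * b * (b + 1) / (d * (d + 1)) * Gamma (c - a - b - 1))"
    using hyp3F2_d_plus_2_eq_Gamma[of a b d "c + 1", unfolded args, OF conv den_c den_d g0 g1 gm1] .
  have G0: "Gamma (c - a - b + 1) = (c - a - b) * Gamma (c - a - b)"
    using Gamma_plus1[OF g1] .
  have G1: "Gamma (c - a - b - 1) = Gamma (c - a - b) / (c - a - b - 1)"
    using Gamma_plus1[OF gm1] nz by (simp add: field_simps)
  show ?thesis
    unfolding sum G0 G1 divide_divide_eq_left[symmetric] by (simp add: divide_inverse algebra_simps)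
qed

end
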